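(* Let $R=E[\eta(X)\eta(X)^\top]$ and $m=\sup_{x\in[0,1]^D}|\eta(x)|_2^2$ for the piecewise Legendre basis $\eta$ of the context, and assume $Q=0$, or $Q\in\mathbb{N}$ satisfies $$2\binom{D+Q}{D}e^{2Q}\le\frac{f_*}{\varpi(1/N)}.$$ Then $\lambda_{\min}(R)\ge f_*/2$, $\lambda_{\max}(R)\le\frac32f^*$, and $m\le N^De^{2Q}\binom{D+Q}{D}$.
   Context: $X$ is an $\mathbb{R}^D$-valued random variable with Lebesgue density $f\mathbf 1_{[0,1]^D}$, where $f$ is continuous and strictly positive on $[0,1]^D$. Let $f_*=\inf_{[0,1]^D}f$, $f^*=\sup_{[0,1]^D}f$, $\varpi(h)=\sup\{|f(x)-f(z)|:x,z\in[0,1]^D,|x-z|_\infty\le h\}$ (if $\varpi(1/N)=0$ the displayed condition is considered satisfied). For $N\in\mathbb{N}$ and $\mathbf i\in\{0,\dots,N-1\}^D$ let $C_{\mathbf i}=\prod_d(i_d/N,(i_d+1)/N]$. $\mathcal{L}_q$ is the Legendre polynomial of degree $q$ normalized by $\mathcal{L}_q(1)=1$. For $\mathbf j\in\mathbb{N}_0^D$, $p_{\mathbf j,\mathbf i}(x)=N^{D/2}\prod_{d=1}^D\sqrt{2j_d+1}\,\mathcal{L}_{j_d}(2(Nx_d-i_d)-1)$. For fixed $Q\in\mathbb{N}_0$, the basis consists of the $K=N^D\binom{D+Q}{D}$ functions $\eta_{\mathbf i,\mathbf j}=p_{\mathbf j,\mathbf i}\mathbf 1_{C_{\mathbf i}}$,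 $\mathbf i\in\{0,\dots,N-1\}^D$, $|\mathbf j|_1\le Q$, arranged in some fixed order into the vector $\eta$. *)

theory Defs
  imports "HOL-Analysis.Analysis"
begin

text \<open>Legendre polynomials normalised by L_q(1) = 1, via Bonnet's recurrence
  L_0 = 1, L_1 = t, (q+2) L_{q+2} = (2q+3) t L_{q+1} - (q+1) L_q.\<close>
fun legendre :: "nat \<Rightarrow> real \<Rightarrow> real" where
  "legendre 0 t = 1"
| "legendre (Suc 0) t = t"
| "legendre (Suc (Suc q)) t =
     ((2 * real q + 3) * t * legendre (Suc q) t - (real q + 1) * legendre q t) / (real q + 2)"

text \<open>The unit cube [0,1]^D, D = CARD('n).\<close>
abbreviation unit_cube :: "(real^'n) set" where
  "unit_cube \<equiv> cbox 0 1"

definition cell_idx :: "nat \<Rightarrow> ('n::finite \<Rightarrow> nat) set" where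
  "cell_idx N = {i. \<forall>d. i d < N}"

definition deg_idx :: "nat \<Rightarrow> ('n::finite \<Rightarrow> nat) set" where
  "deg_idx Q = {j. (\<Sum>d\<in>UNIV. j d) \<le> Q}"

definition basis_idx :: "nat \<Rightarrow> nat \<Rightarrow> (('n::finite \<Rightarrow> nat) \<times> ('n \<Rightarrow> nat)) set" where
  "basis_idx N Q = cell_idx N \<times> deg_idx Q"

definition cell :: "nat \<Rightarrow> ('n::finite \<Rightarrow> nat) \<Rightarrow> (real^'n) set" where
  "cell N i = {x. \<forall>d. real (i d) / real N < x$d \<and> x$d \<le> (real (i d) + 1) / real N}"

definition pleg :: "nat \<Rightarrow> ('n::finite \<Rightarrow> nat) \<Rightarrow> ('n \<Rightarrow> nat) \<Rightarrow> real^'n \<Rightarrow> real" where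
  "pleg N j i x = sqrt (real N) ^ CARD('n) *
     (\<Prod>d\<in>UNIV. sqrt (2 * real (j d) + 1) *
                  legendre (j d) (2 * (real N * x$d - real (i d)) - 1))"

definition eta :: "nat \<Rightarrow> ('n::finite \<Rightarrow> nat) \<times> ('n \<Rightarrow> nat) \<Rightarrow> real^'n \<Rightarrow> real" where
  "eta N ij x = pleg N (snd ij) (fst ij) x * indicator (cell N (fst ij)) x"

definition modcont :: "(real^'n::finite \<Rightarrow> real) \<Rightarrow> real \<Rightarrow> real" where
  "modcont f h = Sup {\<bar>f x - f z\<bar> | x z. x \<in> unit_cube \<and> z \<in> unit_cube \<and> infnorm (x - z) \<le> h}"

definition eigenvalues_on :: "'b set \<Rightarrow> ('b \<Rightarrow> 'b \<Rightarrow> real) \<Rightarrow> real set" where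
  "eigenvalues_on B M = {lam. \<exists>v. (\<exists>a\<in>B. v a \<noteq> 0) \<and>
       (\<forall>a\<in>B. (\<Sum>b\<in>B. M a b * v b) = lam * v a)}"

end

theory Submission
  imports Defs "HOL-Computational_Algebra.Polynomial"
begin

text \<open>The functions \<open>\<eta>\<close> are orthonormal in \<open>L\<^sup>2([0,1]\<^sup>D)\<close>: on a single cell they are tensor
  products of rescaled Legendre polynomials, which are orthonormal by the classical Legendre
  orthogonality relations, and functions supported on different cells have disjoint supports.
  Hence for an eigenvector \<open>v\<close> of \<open>R\<close> with eigenvalue \<open>\<lambda>\<close>, the function \<open>g = \<Sum>\<^sub>a v\<^sub>a \<eta>\<^sub>a\<close>
  satisfies \<open>\<lambda> |v|\<^sup>2 = \<integral> g\<^sup>2 f\<close> and \<open>|v|\<^sup>2 = \<integral> g\<^sup>2\<close>, so \<open>f\<^sub>* \<le> \<lambda> \<le> f\<^sup>*\<close>.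
  For the bound on \<open>m\<close>: at a point of a cell only the \<open>\<le> binom(D+Q,D)\<close> functions of that
  cell are nonzero, and since \<open>|\<L>\<^sub>q| \<le> 1\<close> on \<open>[-1,1]\<close> each of them has square at most
  \<open>N\<^sup>D \<Prod>\<^sub>d (2j\<^sub>d+1) \<le> N\<^sup>D exp(2|j|)\<close>.\<close>

fun legendre_poly :: "nat \<Rightarrow> real poly" where
  "legendre_poly 0 = 1"
| "legendre_poly (Suc 0) = [:0, 1:]"
| "legendre_poly (Suc (Suc q)) = smult (1 / (real q + 2))
     (smult (2 * real q + 3) ([:0, 1:] * legendre_poly (Suc q)) - smult (real q + 1) (legendre_poly q))"

lemma poly_legendre_poly: "poly (legendre_poly n) t = legendre n t"
  by (induction n rule: legendre_poly.induct) (auto simp: field_simps)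

lemma poly_legendre_poly_Suc_Suc:
  "poly (legendre_poly (Suc (Suc q))) t =
     ((2 * real q + 3) * t * poly (legendre_poly (Suc q)) t - (real q + 1) * poly (legendre_poly q) t)
       / (real q + 2)"
  by (simp add: field_simps)

lemma poly_pderiv_legendre_poly_Suc_Suc:
  "poly (pderiv (legendre_poly (Suc (Suc q)))) t =
     ((2 * real q + 3) * (poly (legendre_poly (Suc q)) t + t * poly (pderiv (legendre_poly (Suc q))) t)
       - (real q + 1) * poly (pderiv (legendre_poly q)) t) / (real q + 2)"
  by (simp add: pderiv_smult pderiv_diff pderiv_mult pderiv_pCons field_simps)

lemma legendre_poly_Suc_Suc_smult:
  "smult (real q + 2) (legendre_poly (Suc (Suc q))) =
     smult (2 * real q + 3) ([:0, 1:] * legendre_poly (Suc q)) - smult (real q + 1) (legendre_poly q)"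
proof -
  have "(real q + 2) * (1 / (real q + 2)) = 1" by simp
  then show ?thesis unfolding legendre_poly.simps(3) smult_smult by simp
qed

declare legendre_poly.simps(3) [simp del]

lemma legendre_poly_pderiv_identities:
  fixes t :: real
  defines "P k \<equiv> poly (legendre_poly k) t" and "P' k \<equiv> poly (pderiv (legendre_poly k)) t"
  shows "P' (Suc n) = t * P' n + (real n + 1) * P n
    \<and> t * P' (Suc n) - P' n = (real n + 1) * P (Suc n)
    \<and> (t\<^sup>2 - 1) * P' (Suc n) = (real n + 1) * (t * P (Suc n) - P n)"
proof (induction n)
  case 0
  then show ?case by (simp add: P_def P'_def pderiv_pCons power2_eq_square)
next
  case (Suc n)
  have rec: "P (Suc (Suc n)) = ((2 * real n + 3) * t * P (Suc n) - (real n + 1) * P n) / (real n + 2)"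
    unfolding P_def by (rule poly_legendre_poly_Suc_Suc)
  have rec': "P' (Suc (Suc n)) =
      ((2 * real n + 3) * (P (Suc n) + t * P' (Suc n)) - (real n + 1) * P' n) / (real n + 2)"
    unfolding P_def P'_def by (rule poly_pderiv_legendre_poly_Suc_Suc)
  have IH2: "t * P' (Suc n) - P' n = (real n + 1) * P (Suc n)"
    and IH3: "(t\<^sup>2 - 1) * P' (Suc n) = (real n + 1) * (t * P (Suc n) - P n)"
    using Suc.IH by auto
  have "(2 * real n + 3) * (P (Suc n) + t * P' (Suc n)) - (real n + 1) * P' n
      = (real n + 2) * (t * P' (Suc n) + (real n + 2) * P (Suc n))"
    using IH2 by (simp add: algebra_simps)
  then have e1: "P' (Suc (Suc n)) = t * P' (Suc n) + (real (Suc n) + 1) * P (Suc n)"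
    unfolding rec' by simp
  have e2: "t * P' (Suc (Suc n)) - P' (Suc n) = (real (Suc n) + 1) * P (Suc (Suc n))"
    unfolding e1 rec using IH3 by (simp add: field_simps power2_eq_square) algebra
  have e3: "(t\<^sup>2 - 1) * P' (Suc (Suc n)) = (real (Suc n) + 1) * (t * P (Suc (Suc n)) - P (Suc n))"
    unfolding e1 rec using IH3 by (simp add: field_simps power2_eq_square) algebra
  show ?case using e1 e2 e3 by blast
qed

definition legendre_weight :: "real poly" where
  "legendre_weight = [:1, 0, -1:]"

lemma poly_legendre_weight: "poly legendre_weight t = 1 - t\<^sup>2"
  by (simp add: legendre_weight_def power2_eq_square)

lemma pderiv_legendre_weight: "pderiv legendre_weight = [:0, -2:]"
  by (simp add: legendre_weight_def pderiv_pCons)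

lemma legendre_poly_weighted_pderiv_Suc:
  "legendre_weight * pderiv (legendre_poly (Suc n)) =
     smult (-(real n + 1)) ([:0, 1:] * legendre_poly (Suc n) - legendre_poly n)"
proof (rule poly_ext)
  fix t :: real
  have "(t\<^sup>2 - 1) * poly (pderiv (legendre_poly (Suc n))) t
      = (real n + 1) * (t * poly (legendre_poly (Suc n)) t - poly (legendre_poly n) t)"
    using legendre_poly_pderiv_identities[where t=t and n=n] by blast
  then show "poly (legendre_weight * pderiv (legendre_poly (Suc n))) t =
      poly (smult (-(real n + 1)) ([:0, 1:] * legendre_poly (Suc n) - legendre_poly n)) t"
    by (simp add: poly_legendre_weight) algebra
qed

lemma legendre_poly_ode:
  "pderiv (legendre_weight * pderiv (legendre_poly n)) = smult (-(real n * (real n + 1))) (legendre_poly n)"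
proof (cases n)
  case 0
  then show ?thesis by simp
next
  case (Suc m)
  have d: "pderiv (legendre_weight * pderiv (legendre_poly (Suc m))) = smult (-(real m + 1))
      (legendre_poly (Suc m) + [:0, 1:] * pderiv (legendre_poly (Suc m)) - pderiv (legendre_poly m))"
    unfolding legendre_poly_weighted_pderiv_Suc
    by (simp add: pderiv_smult pderiv_diff pderiv_mult pderiv_pCons pderiv_add)
  have "poly (pderiv (legendre_weight * pderiv (legendre_poly (Suc m)))) t =
      poly (smult (-(real (Suc m) * (real (Suc m) + 1))) (legendre_poly (Suc m))) t" for t
  proof -
    have "t * poly (pderiv (legendre_poly (Suc m))) t - poly (pderiv (legendre_poly m)) t
        = (real m + 1) * poly (legendre_poly (Suc m)) t"
      using legendre_poly_pderiv_identities[where t=t and n=m] by blast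
    then show ?thesis unfolding d by simp algebra
  qed
  then show ?thesis using Suc by (intro poly_ext) auto
qed

definition poly_integral :: "real poly \<Rightarrow> real" where
  "poly_integral p = integral {-1..1} (poly p)"

lemma poly_integral_add: "poly_integral (p + q) = poly_integral p + poly_integral q"
  unfolding poly_integral_def poly_add
  by (intro integral_add) (auto intro!: integrable_continuous_interval continuous_on_poly continuous_on_id)

lemma poly_integral_smult: "poly_integral (smult c p) = c * poly_integral p"
proof -
  have "poly (smult c p) = (\<lambda>x. c * poly p x)" by (rule ext) simp
  then show ?thesis unfolding poly_integral_def by simp
qed

lemma poly_integral_diff: "poly_integral (p - q) = poly_integral p - poly_integral q"
  using poly_integral_add[of "p - q" q] by simp

lemma poly_integral_pderiv: "poly_integral (pderiv p) = poly p 1 - poly p (-1)"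
proof -
  have "(poly (pderiv p) has_integral (poly p 1 - poly p (-1))) {-1..1}"
    by (rule fundamental_theorem_of_calculus)
       (auto intro!: has_real_derivative_iff_has_vector_derivative[THEN iffD1]
          DERIV_subset[OF poly_DERIV])
  then show ?thesis unfolding poly_integral_def by (rule integral_unique)
qed

lemma poly_integral_legendre_weight_pderiv:
  "poly_integral (legendre_weight * pderiv (legendre_poly n) * pderiv (legendre_poly m))
     = real n * (real n + 1) * poly_integral (legendre_poly n * legendre_poly m)"
proof -
  let ?P = legendre_poly
  have "pderiv (legendre_weight * pderiv (?P n) * ?P m) = smult (-(real n * (real n + 1))) (?P n * ?P m)
      + legendre_weight * pderiv (?P n) * pderiv (?P m)"
    by (subst pderiv_mult) (simp add: legendre_poly_ode algebra_simps)
  then have "poly_integral (pderiv (legendre_weight * pderiv (?P n) * ?P m))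
      = -(real n * (real n + 1)) * poly_integral (?P n * ?P m)
        + poly_integral (legendre_weight * pderiv (?P n) * pderiv (?P m))"
    by (simp add: poly_integral_add poly_integral_smult del: smult_minus_left mult_smult_left)
  moreover have "poly_integral (pderiv (legendre_weight * pderiv (?P n) * ?P m)) = 0"
    by (simp add: poly_integral_pderiv poly_legendre_weight)
  ultimately show ?thesis by simp
qed

lemma legendre_poly_orthogonal:
  assumes "n \<noteq> m"
  shows "poly_integral (legendre_poly n * legendre_poly m) = 0"
proof -
  have "real n * (real n + 1) * poly_integral (legendre_poly n * legendre_poly m)
      = real m * (real m + 1) * poly_integral (legendre_poly n * legendre_poly m)"
    using poly_integral_legendre_weight_pderiv[of n m] poly_integral_legendre_weight_pderiv[of m n]
    by (metis (no_types) mult.commute mult.left_commute)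
  moreover have "real n * (real n + 1) \<noteq> real m * (real m + 1)"
  proof
    assume "real n * (real n + 1) = real m * (real m + 1)"
    then have "n * (n + 1) = m * (m + 1)" by (metis of_nat_1 of_nat_add of_nat_eq_iff of_nat_mult)
    moreover have "n < m \<Longrightarrow> n * (n + 1) < m * (m + 1)" by (intro mult_strict_mono) auto
    moreover have "m < n \<Longrightarrow> m * (m + 1) < n * (n + 1)" by (intro mult_strict_mono) auto
    ultimately show False using assms by (metis less_irrefl nat_neq_iff)
  qed
  ultimately show ?thesis by simp
qed

lemma legendre_poly_norm_step:
  "(2 * real q + 5) * poly_integral (legendre_poly (Suc (Suc q)) * legendre_poly (Suc (Suc q)))
     = (2 * real q + 3) * poly_integral (legendre_poly (Suc q) * legendre_poly (Suc q))"
proof -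
  let ?P = legendre_poly
  have rec: "(real k + 2) * poly_integral (?P (Suc (Suc k)) * p)
      = (2 * real k + 3) * poly_integral ([:0, 1:] * ?P (Suc k) * p) - (real k + 1) * poly_integral (?P k * p)"
    for k p
  proof -
    have "smult (real k + 2) (?P (Suc (Suc k))) * p
        = smult (2 * real k + 3) ([:0, 1:] * ?P (Suc k) * p) - smult (real k + 1) (?P k * p)"
      unfolding legendre_poly_Suc_Suc_smult by (simp add: algebra_simps)
    then have "poly_integral (smult (real k + 2) (?P (Suc (Suc k))) * p)
        = poly_integral (smult (2 * real k + 3) ([:0, 1:] * ?P (Suc k) * p) - smult (real k + 1) (?P k * p))"
      by simp
    then show ?thesis by (simp only: poly_integral_diff poly_integral_smult mult_smult_left)
  qed
  have "(real q + 2) * ((2 * real q + 5) * poly_integral (?P (Suc (Suc q)) * ?P (Suc (Suc q))))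
      = (real q + 2) * ((2 * real q + 3) * poly_integral (?P (Suc q) * ?P (Suc q)))"
    using rec[of q "?P (Suc (Suc q))"] rec[of "Suc q" "?P (Suc q)"]
      legendre_poly_orthogonal[of q "Suc (Suc q)"] legendre_poly_orthogonal[of "Suc (Suc (Suc q))" "Suc q"]
    by (simp add: algebra_simps)
  then show ?thesis by simp
qed

lemma legendre_poly_norm: "poly_integral (legendre_poly n * legendre_poly n) = 2 / (2 * real n + 1)"
proof (induction n rule: legendre_poly.induct)
  case 1
  have "poly_integral (pderiv [:0, 1:]) = 2" by (simp add: poly_integral_pderiv)
  then show ?case by (simp add: pderiv_pCons) (metis one_pCons)
next
  case 2
  have "[:0, 1:] * [:0, 1:] = pderiv [:0, 0, 0, 1/3 :: real:]" by (simp add: pderiv_pCons)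
  then show ?case by (simp add: poly_integral_pderiv)
next
  case (3 q)
  have "(2 * real q + 3) * (2 / (2 * real q + 3)) = 2"
    by (simp add: field_simps)
  then have "(2 * real q + 5) * poly_integral (legendre_poly (Suc (Suc q)) * legendre_poly (Suc (Suc q))) = 2"
    using legendre_poly_norm_step[of q] 3 by (simp add: add.commute)
  then show ?case by (simp add: field_simps)
qed

lemma legendre_poly_at_pm1: "poly (legendre_poly n) 1 = 1 \<and> poly (legendre_poly n) (-1) = (-1) ^ n"
  by (induction n rule: legendre_poly.induct) (auto simp: poly_legendre_poly_Suc_Suc field_simps)

text \<open>\<open>F = P\<^sub>n\<^sup>2 + (1 - t\<^sup>2) P\<^sub>n'\<^sup>2 / (n(n+1))\<close> has derivative \<open>2t P\<^sub>n'\<^sup>2 / (n(n+1))\<close> by the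
  differential equation, so on \<open>[-1,1]\<close> it is largest at \<open>\<plusminus>1\<close>, where it equals \<open>1\<close>.\<close>
lemma legendre_sq_le_1:
  assumes "\<bar>t\<bar> \<le> 1"
  shows "(legendre n t)\<^sup>2 \<le> 1"
proof (cases n)
  case 0
  then show ?thesis by simp
next
  case (Suc m)
  let ?P = "legendre_poly n"
  define k where "k = real n * (real n + 1)"
  have k: "k > 0" unfolding k_def using Suc by simp
  define F where "F = ?P * ?P + smult (1 / k) (legendre_weight * pderiv ?P * pderiv ?P)"
  have ode: "- 2 * s * poly (pderiv ?P) s + (1 - s\<^sup>2) * poly (pderiv (pderiv ?P)) s = - k * poly ?P s" for s
  proof -
    have "poly (pderiv (legendre_weight * pderiv ?P)) s = poly (smult (-(real n * (real n + 1))) ?P) s"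
      by (simp only: legendre_poly_ode)
    then show ?thesis
      by (simp add: pderiv_mult poly_legendre_weight pderiv_legendre_weight k_def algebra_simps)
  qed
  have "poly (pderiv F) s = 2 * poly ?P s * poly (pderiv ?P) s + (1 / k) * (poly (pderiv ?P) s *
      (2 * s * poly (pderiv ?P) s + 2 * (- 2 * s * poly (pderiv ?P) s + (1 - s\<^sup>2) * poly (pderiv (pderiv ?P)) s)))"
    for s
    unfolding F_def
    by (simp add: pderiv_mult pderiv_add pderiv_smult poly_legendre_weight pderiv_legendre_weight algebra_simps)
  then have "poly (pderiv F) s = 2 * s * (poly (pderiv ?P) s)\<^sup>2 / k" for s
    unfolding ode using k by (simp add: field_simps power2_eq_square)
  then have der: "DERIV (poly F) s :> 2 * s * (poly (pderiv ?P) s)\<^sup>2 / k" for s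
    using poly_DERIV[of F s] by simp
  have F_pm1: "poly F 1 = 1" "poly F (-1) = 1"
    using legendre_poly_at_pm1[of n] by (simp_all add: F_def poly_legendre_weight)
  have "poly F t \<le> 1"
  proof (cases "t \<ge> 0")
    case True
    have "poly F t \<le> poly F 1"
      by (rule DERIV_nonneg_imp_nondecreasing[of t 1 "poly F"])
         (use assms True k der in \<open>auto intro!: exI[of _ "2 * _ * (poly (pderiv ?P) _)\<^sup>2 / k"]\<close>)
    then show ?thesis using F_pm1 by simp
  next
    case False
    have "poly F t \<le> poly F (-1)"
      by (rule DERIV_nonpos_imp_nonincreasing[of "-1" t "poly F"])
         (use assms False k der in \<open>auto intro!: exI[of _ "2 * _ * (poly (pderiv ?P) _)\<^sup>2 / k"]
            simp: mult_nonpos_nonneg divide_nonpos_pos\<close>)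
    then show ?thesis using F_pm1 by simp
  qed
  moreover have "(poly ?P t)\<^sup>2 \<le> poly F t"
  proof -
    have "0 \<le> 1 - t\<^sup>2" using assms by (simp add: abs_square_le_1)
    then have "0 \<le> (1 / k) * ((1 - t\<^sup>2) * poly (pderiv ?P) t * poly (pderiv ?P) t)"
      using k by (simp add: mult.assoc)
    then show ?thesis by (simp add: F_def poly_legendre_weight power2_eq_square)
  qed
  ultimately show ?thesis by (simp add: poly_legendre_poly)
qed

lemma continuous_on_legendre [continuous_intros]:
  "continuous_on S g \<Longrightarrow> continuous_on S (\<lambda>y. legendre j (g y))"
  using continuous_on_poly[of S g "legendre_poly j"] by (simp add: poly_legendre_poly)

definition cell_legendre :: "nat \<Rightarrow> nat \<Rightarrow> nat \<Rightarrow> real \<Rightarrow> real" where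
  "cell_legendre N c j y = sqrt (real N) * sqrt (2 * real j + 1) * legendre j (2 * (real N * y - real c) - 1)"

lemma continuous_on_cell_legendre [continuous_intros]:
  "continuous_on S g \<Longrightarrow> continuous_on S (\<lambda>x. cell_legendre N c j (g x))"
  unfolding cell_legendre_def by (intro continuous_intros)

lemma cell_legendre_orthonormal:
  assumes N: "N \<ge> 1"
  shows "((\<lambda>y. cell_legendre N c j y * cell_legendre N c k y) has_integral (if j = k then 1 else 0))
           {real c / real N .. (real c + 1) / real N}"
proof -
  define g where "g = poly (legendre_poly j * legendre_poly k)"
  define J where "J = poly_integral (legendre_poly j * legendre_poly k)"
  have "(g has_integral J) (cbox (-1) 1)"
    unfolding g_def J_def poly_integral_def cbox_interval
    by (intro integrable_integral integrable_continuous_interval continuous_on_poly continuous_on_id)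
  then have "((\<lambda>y. g (y * (real N * 2) - (1 + real c * 2))) has_integral J / (real N * 2))
      {real c / real N .. (2 + real c * 2) / (real N * 2)}"
    using has_integral_affinity'[of g J "-1" 1 "2 * real N" "-(2 * real c + 1)"] N
    by (simp add: cbox_interval field_simps)
  moreover have "(2 + real c * 2) / (real N * 2) = (real c + 1) / real N"
    using N by (simp add: field_split_simps)
  ultimately have "((\<lambda>y. g (2 * real N * y - (2 * real c + 1))) has_integral J / (2 * real N))
      {real c / real N .. (real c + 1) / real N}"
    by (simp add: ac_simps)
  then have "((\<lambda>y. (sqrt (real N) * sqrt (2 * real j + 1)) * (sqrt (real N) * sqrt (2 * real k + 1))
        * g (2 * real N * y - (2 * real c + 1)))
      has_integral (sqrt (real N) * sqrt (2 * real j + 1)) * (sqrt (real N) * sqrt (2 * real k + 1))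
        * (J / (2 * real N))) {real c / real N .. (real c + 1) / real N}"
    by (rule has_integral_mult_right)
  moreover have "(sqrt (real N) * sqrt (2 * real j + 1)) * (sqrt (real N) * sqrt (2 * real k + 1))
      * (J / (2 * real N)) = (if j = k then 1 else 0)"
  proof -
    have sqrt_N: "sqrt (real N) * (sqrt (real N) * z) = real N * z" for z
      by (simp flip: mult.assoc)
    show ?thesis
      using N by (auto simp: J_def legendre_poly_norm legendre_poly_orthogonal sqrt_N field_simps)
  qed
  ultimately show ?thesis
    unfolding g_def cell_legendre_def by (simp add: poly_legendre_poly algebra_simps)
qed

lemma cell_legendre_sq_le:
  assumes N: "N \<ge> 1" and y: "real c / real N < y" "y \<le> (real c + 1) / real N"
  shows "(cell_legendre N c j y)\<^sup>2 \<le> real N * exp (2 * real j)"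
proof -
  define s where "s = 2 * (real N * y - real c) - 1"
  have "real c < real N * y" "real N * y \<le> real c + 1" using y N by (auto simp: field_simps)
  then have "\<bar>s\<bar> \<le> 1" unfolding s_def by (simp add: abs_le_iff algebra_simps)
  have "(cell_legendre N c j y)\<^sup>2 = real N * (2 * real j + 1) * (legendre j s)\<^sup>2"
    unfolding cell_legendre_def s_def by (simp add: power_mult_distrib)
  also have "\<dots> \<le> real N * (2 * real j + 1)"
    using legendre_sq_le_1[OF \<open>\<bar>s\<bar> \<le> 1\<close>] by (intro mult_left_le) auto
  also have "\<dots> \<le> real N * exp (2 * real j)"
    using exp_ge_add_one_self[of "2 * real j"] by (intro mult_left_mono) (auto simp: add.commute)
  finally show ?thesis .
qed

lemma lborel_integral_prod_Basis:
  fixes G :: "'a::euclidean_space \<Rightarrow> real \<Rightarrow> real"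
  assumes int: "\<And>b. b \<in> Basis \<Longrightarrow> integrable lborel (G b)"
  shows "integrable lborel (\<lambda>x::'a. \<Prod>b\<in>Basis. G b (x \<bullet> b))
    \<and> integral\<^sup>L lborel (\<lambda>x::'a. \<Prod>b\<in>Basis. G b (x \<bullet> b)) = (\<Prod>b\<in>Basis. integral\<^sup>L lborel (G b))"
proof -
  interpret finite_product_sigma_finite "\<lambda>_. lborel" "Basis :: 'a set" by standard simp
  define T where "T = (\<lambda>f. \<Sum>b\<in>(Basis::'a set). f b *\<^sub>R b)"
  have Tm: "T \<in> measurable (\<Pi>\<^sub>M b\<in>(Basis::'a set). lborel) borel"
    unfolding T_def by measurable
  have Gm: "G b \<in> borel_measurable borel" if "b \<in> Basis" for b
    using borel_measurable_integrable[OF int[OF that]] by simp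
  have Fm: "(\<lambda>x::'a. \<Prod>b\<in>Basis. G b (x \<bullet> b)) \<in> borel_measurable borel"
    by (intro borel_measurable_prod measurable_compose[OF _ Gm] borel_measurable_inner) auto
  have Tb: "T f \<bullet> b = f b" if "b \<in> Basis" for f b
    using that unfolding T_def by (simp add: inner_sum_left inner_Basis if_distrib sum.delta cong: if_cong)
  have comp: "(\<lambda>f. \<Prod>b\<in>Basis. G b (T f \<bullet> b)) = (\<lambda>f. \<Prod>b\<in>Basis. G b (f b))"
    by (intro ext prod.cong) (simp_all add: Tb)
  have L: "lborel = distr (\<Pi>\<^sub>M b\<in>(Basis::'a set). lborel) borel T"
    unfolding T_def by (rule lborel_eq)
  have i1: "integrable (\<Pi>\<^sub>M b\<in>(Basis::'a set). lborel) (\<lambda>f. \<Prod>b\<in>Basis. G b (f b))"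
    by (rule product_integrable_prod) (auto intro: int)
  have "integrable lborel (\<lambda>x::'a. \<Prod>b\<in>Basis. G b (x \<bullet> b))"
    unfolding L by (subst integrable_distr_eq[OF Tm Fm]) (simp add: comp i1)
  moreover have "integral\<^sup>L lborel (\<lambda>x::'a. \<Prod>b\<in>Basis. G b (x \<bullet> b)) = (\<Prod>b\<in>Basis. integral\<^sup>L lborel (G b))"
    unfolding L by (subst integral_distr[OF Tm Fm]) (simp add: comp product_integral_prod int)
  ultimately show ?thesis by blast
qed

lemma Basis_vec_axis: "(Basis :: (real^'n) set) = (\<lambda>d. axis d 1) ` UNIV"
  by (auto simp add: Basis_vec_def)

lemma prod_Basis_vec:
  fixes H :: "real^'n \<Rightarrow> real"
  shows "(\<Prod>b\<in>(Basis :: (real^'n) set). H b) = (\<Prod>d\<in>UNIV. H (axis d 1))"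
proof -
  have "inj (\<lambda>d::'n. axis d (1::real))" by (auto simp: inj_on_def axis_eq_axis)
  then show ?thesis unfolding Basis_vec_axis by (simp add: prod.reindex)
qed

lemma lborel_integral_prod_vec:
  fixes g :: "'n::finite \<Rightarrow> real \<Rightarrow> real"
  assumes int: "\<And>d. integrable lborel (g d)"
  shows "integrable lborel (\<lambda>x::real^'n. \<Prod>d\<in>UNIV. g d (x $ d))
    \<and> integral\<^sup>L lborel (\<lambda>x::real^'n. \<Prod>d\<in>UNIV. g d (x $ d)) = (\<Prod>d\<in>UNIV. integral\<^sup>L lborel (g d))"
proof -
  define G where "G b = g (SOME d. axis d 1 = b)" for b :: "real^'n"
  have Ga: "G (axis d 1) = g d" for d
  proof -
    have "(SOME d'. axis d' (1::real) = axis d 1) = d"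
      by (rule some_equality) (auto simp: axis_eq_axis)
    then show ?thesis unfolding G_def by simp
  qed
  have intG: "integrable lborel (G b)" if "b \<in> Basis" for b
    using that Ga int unfolding Basis_vec_axis by auto
  have e1: "(\<lambda>x::real^'n. \<Prod>b\<in>Basis. G b (x \<bullet> b)) = (\<lambda>x. \<Prod>d\<in>UNIV. g d (x $ d))"
    by (rule ext) (simp add: prod_Basis_vec Ga inner_axis)
  have e2: "(\<Prod>b\<in>(Basis :: (real^'n) set). integral\<^sup>L lborel (G b)) = (\<Prod>d\<in>UNIV. integral\<^sup>L lborel (g d))"
    by (simp add: prod_Basis_vec Ga)
  have "integrable lborel (\<lambda>x::real^'n. \<Prod>b\<in>Basis. G b (x \<bullet> b)) \<and> integral\<^sup>L lborel (\<lambda>x::real^'n. \<Prod>b\<in>Basis. G b (x \<bullet> b)) = (\<Prod>b\<in>Basis. integral\<^sup>L lborel (G b))"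
    by (rule lborel_integral_prod_Basis) (rule intG)
  then show ?thesis unfolding e1 e2 .
qed

lemma has_integral_prod_cbox:
  fixes lo hi :: "real^'n::finite" and h :: "'n \<Rightarrow> real \<Rightarrow> real"
  assumes cont: "\<And>d. continuous_on {lo$d..hi$d} (h d)"
  shows "((\<lambda>x. \<Prod>d\<in>UNIV. h d (x$d)) has_integral (\<Prod>d\<in>UNIV. integral {lo$d..hi$d} (h d))) (cbox lo hi)"
proof -
  define g where "g d y = indicator {lo$d..hi$d} y * h d y" for d y
  have intg: "integrable lborel (g d)" for d
    using borel_integrable_compact[OF compact_Icc cont[of d]] unfolding g_def by simp
  have g1: "integral\<^sup>L lborel (g d) = integral {lo$d..hi$d} (h d)" for d
  proof -
    have "(g d has_integral integral\<^sup>L lborel (g d)) UNIV" by (rule has_integral_integral_real[OF intg])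
    moreover have "g d = (\<lambda>y. if y \<in> {lo$d..hi$d} then h d y else 0)"
      by (auto simp: g_def indicator_def)
    moreover have "(h d has_integral integral {lo$d..hi$d} (h d)) {lo$d..hi$d}"
      by (intro integrable_integral integrable_continuous_interval cont)
    ultimately show ?thesis
      using has_integral_restrict_UNIV has_integral_unique by metis
  qed
  have P: "integrable lborel (\<lambda>x::real^'n. \<Prod>d\<in>UNIV. g d (x $ d))
    \<and> integral\<^sup>L lborel (\<lambda>x::real^'n. \<Prod>d\<in>UNIV. g d (x $ d)) = (\<Prod>d\<in>UNIV. integral\<^sup>L lborel (g d))"
    by (rule lborel_integral_prod_vec[OF intg])
  have F: "(\<lambda>x::real^'n. \<Prod>d\<in>UNIV. g d (x $ d)) = (\<lambda>x. if x \<in> cbox lo hi then \<Prod>d\<in>UNIV. h d (x$d) else 0)"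
  proof (rule ext)
    fix x :: "real^'n"
    show "(\<Prod>d\<in>UNIV. g d (x $ d)) = (if x \<in> cbox lo hi then \<Prod>d\<in>UNIV. h d (x$d) else 0)"
    proof (cases "x \<in> cbox lo hi")
      case True
      then show ?thesis by (auto simp: g_def mem_box_cart indicator_def intro!: prod.cong)
    next
      case False
      then obtain d where "\<not> (lo$d \<le> x$d \<and> x$d \<le> hi$d)" by (auto simp: mem_box_cart)
      then have "g d (x$d) = 0" by (simp add: g_def indicator_def)
      then show ?thesis using False by (auto intro!: prod_zero)
    qed
  qed
  have "((\<lambda>x. if x \<in> cbox lo hi then \<Prod>d\<in>UNIV. h d (x$d) else 0) has_integral (\<Prod>d\<in>UNIV. integral {lo$d..hi$d} (h d))) UNIV"
    using has_integral_integral_real[of "\<lambda>x::real^'n. \<Prod>d\<in>UNIV. g d (x $ d)"] P unfolding F g1 by simp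
  then show ?thesis by (simp only: has_integral_restrict_UNIV)
qed

definition cell_lower :: "nat \<Rightarrow> ('n::finite \<Rightarrow> nat) \<Rightarrow> real^'n" where
  "cell_lower N i = (\<chi> d. real (i d) / real N)"

definition cell_upper :: "nat \<Rightarrow> ('n::finite \<Rightarrow> nat) \<Rightarrow> real^'n" where
  "cell_upper N i = (\<chi> d. (real (i d) + 1) / real N)"

lemma cell_subset_cbox: "cell N i \<subseteq> cbox (cell_lower N i) (cell_upper N i)"
  by (auto simp: cell_def cell_lower_def cell_upper_def mem_box_cart less_imp_le)

lemma cbox_cell_subset_unit_cube:
  assumes "N \<ge> 1" "i \<in> cell_idx N"
  shows "cbox (cell_lower N i) (cell_upper N i) \<subseteq> unit_cube"
proof
  fix x assume x: "x \<in> cbox (cell_lower N i) (cell_upper N i)"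
  show "x \<in> unit_cube" unfolding mem_box_cart
  proof
    fix d
    have "i d < N" using assms(2) by (simp add: cell_idx_def)
    then have "(real (i d) + 1) / real N \<le> 1" using assms(1) by (simp add: field_simps)
    moreover have "real (i d) / real N \<le> x$d" "x$d \<le> (real (i d) + 1) / real N"
      using x by (auto simp: mem_box_cart cell_lower_def cell_upper_def)
    moreover have "0 \<le> real (i d) / real N" by simp
    ultimately have "0 \<le> x$d" "x$d \<le> 1" by linarith+
    then show "(0::real^'a)$d \<le> x$d \<and> x$d \<le> (1::real^'a)$d" by simp
  qed
qed

lemma negligible_coordinate_hyperplanes: "negligible (\<Union>d. {x::real^'n::finite. x$d = c$d})"
proof (rule negligible_Union)
  fix T assume "T \<in> range (\<lambda>d. {x::real^'n. x$d = c$d})"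
  then obtain d where "T = {x. axis d 1 \<bullet> x = c$d}" by (auto simp: inner_axis')
  then show "negligible T" by (simp add: negligible_hyperplane axis_eq_0_iff)
qed simp

lemma cell_unique:
  assumes "N \<ge> 1" "x \<in> cell N i" "x \<in> cell N i'"
  shows "i = i'"
proof
  fix d
  have "real (i d) < real N * x$d" "real N * x$d \<le> real (i d) + 1"
       "real (i' d) < real N * x$d" "real N * x$d \<le> real (i' d) + 1"
    using assms by (auto simp: cell_def field_simps)
  then show "i d = i' d" by linarith
qed

text \<open>A cell differs from its closure only on finitely many hyperplanes, so integrating over
  the cell is integrating over the closed box.\<close>
lemma has_integral_indicator_cell:
  fixes h :: "real^'n::finite \<Rightarrow> real"
  assumes N: "N \<ge> 1" and i: "i \<in> cell_idx N"
    and h: "(h has_integral J) (cbox (cell_lower N i) (cell_upper N i))"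
  shows "((\<lambda>x. h x * indicator (cell N i) x) has_integral J) unit_cube"
proof -
  have "((\<lambda>x. h x * indicator (cell N i) x) has_integral J) (cbox (cell_lower N i) (cell_upper N i))"
  proof (rule has_integral_spike[OF negligible_coordinate_hyperplanes _ h])
    fix x assume "x \<in> cbox (cell_lower N i) (cell_upper N i) - (\<Union>d. {x. x$d = cell_lower N i$d})"
    then have "x \<in> cell N i"
      by (auto simp: cell_def mem_box_cart cell_lower_def cell_upper_def less_le) (metis)
    then show "h x * indicator (cell N i) x = h x" by simp
  qed
  then show ?thesis
    by (rule has_integral_on_superset)
      (use cell_subset_cbox[of N i] cbox_cell_subset_unit_cube[OF N i] in \<open>auto simp: indicator_def\<close>)
qed

lemma has_integral_quadratic_form:
  fixes e :: "'b \<Rightarrow> 'a::euclidean_space \<Rightarrow> real"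
  assumes B: "finite B"
    and int: "\<And>a b. a \<in> B \<Longrightarrow> b \<in> B \<Longrightarrow> (\<lambda>x. e a x * e b x * h x) integrable_on S"
  shows "((\<lambda>x. (\<Sum>a\<in>B. v a * e a x)\<^sup>2 * h x) has_integral
     (\<Sum>a\<in>B. \<Sum>b\<in>B. v a * v b * integral S (\<lambda>x. e a x * e b x * h x))) S"
proof -
  have "(\<Sum>a\<in>B. v a * e a x)\<^sup>2 * h x = (\<Sum>a\<in>B. \<Sum>b\<in>B. v a * v b * (e a x * e b x * h x))" for x
    unfolding power2_eq_square sum_distrib_left sum_distrib_right
    by (intro sum.cong refl) (simp add: mult_ac)
  moreover have "((\<lambda>x. \<Sum>a\<in>B. \<Sum>b\<in>B. v a * v b * (e a x * e b x * h x)) has_integral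
      (\<Sum>a\<in>B. \<Sum>b\<in>B. v a * v b * integral S (\<lambda>x. e a x * e b x * h x))) S"
    using B int by (intro has_integral_sum has_integral_mult_right integrable_integral) auto
  ultimately show ?thesis by simp
qed

text \<open>Rayleigh quotient argument: for an eigenvector \<open>v\<close> and \<open>g = \<Sum>\<^sub>a v\<^sub>a e\<^sub>a\<close>, orthonormality
  gives \<open>\<integral> g\<^sup>2 = |v|\<^sup>2\<close> while the eigen equation gives \<open>\<integral> g\<^sup>2 h = \<lambda> |v|\<^sup>2\<close>.\<close>
lemma eigenvalue_weighted_gram_between:
  fixes e :: "'b \<Rightarrow> 'a::euclidean_space \<Rightarrow> real"
  assumes B: "finite B"
    and int: "\<And>a b. a \<in> B \<Longrightarrow> b \<in> B \<Longrightarrow> (\<lambda>x. e a x * e b x) integrable_on S"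
    and int_h: "\<And>a b. a \<in> B \<Longrightarrow> b \<in> B \<Longrightarrow> (\<lambda>x. e a x * e b x * h x) integrable_on S"
    and orth: "\<And>a b. a \<in> B \<Longrightarrow> b \<in> B \<Longrightarrow> integral S (\<lambda>x. e a x * e b x) = (if a = b then 1 else 0)"
    and h: "\<And>x. x \<in> S \<Longrightarrow> m \<le> h x \<and> h x \<le> M"
    and lam: "lam \<in> eigenvalues_on B (\<lambda>a b. integral S (\<lambda>x. e a x * e b x * h x))"
  shows "m \<le> lam \<and> lam \<le> M"
proof -
  obtain v a0 where a0: "a0 \<in> B" "v a0 \<noteq> 0"
    and eig: "\<And>a. a \<in> B \<Longrightarrow> (\<Sum>b\<in>B. integral S (\<lambda>x. e a x * e b x * h x) * v b) = lam * v a"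
    using lam unfolding eigenvalues_on_def by blast
  define norm2 where "norm2 = (\<Sum>a\<in>B. v a * v a)"
  define g where "g x = (\<Sum>a\<in>B. v a * e a x)" for x
  have "0 < v a0 * v a0" using a0(2) by (metis not_real_square_gt_zero)
  also have "\<dots> \<le> norm2" unfolding norm2_def by (rule member_le_sum[OF a0(1)]) (auto simp: B)
  finally have norm2_pos: "norm2 > 0" .
  have "(\<Sum>a\<in>B. \<Sum>b\<in>B. v a * v b * integral S (\<lambda>x. e a x * e b x * h x))
      = (\<Sum>a\<in>B. v a * (\<Sum>b\<in>B. integral S (\<lambda>x. e a x * e b x * h x) * v b))"
    by (simp add: sum_distrib_left mult_ac)
  also have "\<dots> = (\<Sum>a\<in>B. v a * (lam * v a))" by (intro sum.cong refl) (simp add: eig)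
  also have "\<dots> = lam * norm2" by (simp add: norm2_def sum_distrib_left mult_ac)
  finally have weighted: "((\<lambda>x. (g x)\<^sup>2 * h x) has_integral lam * norm2) S"
    using has_integral_quadratic_form[OF B, where e=e and h=h and S=S and v=v] int_h unfolding g_def by simp
  have "(\<Sum>a\<in>B. \<Sum>b\<in>B. v a * v b * integral S (\<lambda>x. e a x * e b x * 1)) = norm2"
    by (simp add: orth norm2_def B if_distrib cong: sum.cong if_cong)
  then have unweighted: "((\<lambda>x. (g x)\<^sup>2) has_integral norm2) S"
    using has_integral_quadratic_form[OF B, where e=e and h="\<lambda>_. 1" and S=S and v=v] int unfolding g_def by simp
  have "m * norm2 \<le> lam * norm2"
    by (rule has_integral_le[OF has_integral_mult_right[OF unweighted] weighted])
       (use h in \<open>auto simp: mult.commute intro: mult_right_mono\<close>)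
  moreover have "lam * norm2 \<le> M * norm2"
    by (rule has_integral_le[OF weighted has_integral_mult_right[OF unweighted]])
       (use h in \<open>auto simp: mult.commute intro: mult_right_mono\<close>)
  ultimately show ?thesis using norm2_pos by simp
qed

lemma pleg_eq_prod: "pleg N j i x = (\<Prod>d\<in>UNIV. cell_legendre N (i d) (j d) (x$d))"
  unfolding pleg_def cell_legendre_def by (simp add: prod.distrib mult.assoc)

lemma continuous_on_pleg: "continuous_on S (pleg N j i)"
  unfolding pleg_eq_prod[abs_def] by (intro continuous_intros)

lemma eta_mult_eta:
  assumes "N \<ge> 1"
  shows "eta N (i, j) x * eta N (i', k) x =
    (if i = i' then pleg N j i x * pleg N k i x * indicator (cell N i) x else 0)"
  using cell_unique[OF assms, of x i i'] by (auto simp: eta_def indicator_def)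

lemma integrable_eta_mult_eta:
  fixes h :: "real^'n::finite \<Rightarrow> real"
  assumes N: "N \<ge> 1" and a: "a \<in> basis_idx N Q" and b: "b \<in> basis_idx N Q"
    and h: "continuous_on unit_cube h"
  shows "(\<lambda>x. eta N a x * eta N b x * h x) integrable_on unit_cube"
proof -
  obtain i j i' k where ab: "a = (i, j)" "b = (i', k)" by (cases a, cases b) auto
  have i: "i \<in> cell_idx N" using a ab by (simp add: basis_idx_def)
  define H where "H x = pleg N j i x * pleg N k i x * h x" for x
  have "continuous_on unit_cube H"
    unfolding H_def by (intro continuous_intros continuous_on_pleg h)
  then have "continuous_on (cbox (cell_lower N i) (cell_upper N i)) H"
    by (rule continuous_on_subset) (rule cbox_cell_subset_unit_cube[OF N i])
  then have "(H has_integral integral (cbox (cell_lower N i) (cell_upper N i)) H)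
      (cbox (cell_lower N i) (cell_upper N i))"
    by (intro integrable_integral integrable_continuous)
  from has_integral_indicator_cell[OF N i this]
  have "(\<lambda>x. H x * indicator (cell N i) x) integrable_on unit_cube" by blast
  moreover have "(\<lambda>x. eta N a x * eta N b x * h x) = (\<lambda>x. if i = i' then H x * indicator (cell N i) x else 0)"
    by (rule ext) (simp add: ab eta_mult_eta[OF N] H_def)
  ultimately show ?thesis by (cases "i = i'") auto
qed

lemma eta_orthonormal:
  fixes a b :: "('n::finite \<Rightarrow> nat) \<times> ('n \<Rightarrow> nat)"
  assumes N: "N \<ge> 1" and a: "a \<in> basis_idx N Q" and b: "b \<in> basis_idx N Q"
  shows "integral unit_cube (\<lambda>x::real^'n. eta N a x * eta N b x) = (if a = b then 1 else 0)"
proof -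
  obtain i j i' k where ab: "a = (i, j)" "b = (i', k)" by (cases a, cases b) auto
  have i: "i \<in> cell_idx N" using a ab by (simp add: basis_idx_def)
  show ?thesis
  proof (cases "i = i'")
    case True
    define H where "H x = pleg N j i x * pleg N k i x" for x :: "real^'n"
    have H: "H = (\<lambda>x. \<Prod>d\<in>UNIV. cell_legendre N (i d) (j d) (x$d) * cell_legendre N (i d) (k d) (x$d))"
      unfolding H_def pleg_eq_prod by (simp add: prod.distrib fun_eq_iff)
    have "(H has_integral (\<Prod>d\<in>UNIV. integral {cell_lower N i$d .. cell_upper N i$d}
        (\<lambda>y. cell_legendre N (i d) (j d) y * cell_legendre N (i d) (k d) y)))
        (cbox (cell_lower N i) (cell_upper N i))"
      unfolding H by (rule has_integral_prod_cbox) (intro continuous_intros continuous_on_id)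
    moreover have "integral {cell_lower N i$d .. cell_upper N i$d}
        (\<lambda>y. cell_legendre N (i d) (j d) y * cell_legendre N (i d) (k d) y) = (if j d = k d then 1 else 0)" for d
      using cell_legendre_orthonormal[OF N, of "i d" "j d" "k d"]
      by (simp add: cell_lower_def cell_upper_def integral_unique)
    moreover have "(\<Prod>d\<in>UNIV. (if j d = k d then 1 else 0 :: real)) = (if j = k then 1 else 0)"
      by (auto simp: fun_eq_iff intro: prod_zero)
    ultimately have "(H has_integral (if j = k then 1 else 0)) (cbox (cell_lower N i) (cell_upper N i))"
      by simp
    from has_integral_indicator_cell[OF N i this]
    show ?thesis using True by (simp add: ab eta_mult_eta[OF N] H_def integral_unique)
  next
    case False
    then show ?thesis by (simp add: ab eta_mult_eta[OF N])
  qed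
qed

lemma finite_cell_idx: "finite (cell_idx N :: ('n::finite \<Rightarrow> nat) set)"
proof -
  have "cell_idx N = PiE UNIV (\<lambda>_::'n. {..<N})"
    by (auto simp: cell_idx_def PiE_def extensional_def)
  then show ?thesis by (simp add: finite_PiE)
qed

lemma finite_deg_idx: "finite (deg_idx Q :: ('n::finite \<Rightarrow> nat) set)"
proof -
  have "j d \<le> Q" if "j \<in> deg_idx Q" for j :: "'n \<Rightarrow> nat" and d
    using that member_le_sum[of d UNIV j] by (simp add: deg_idx_def)
  then have "deg_idx Q \<subseteq> PiE UNIV (\<lambda>_::'n. {..Q})"
    by (auto simp: PiE_def extensional_def)
  then show ?thesis by (rule finite_subset) (simp add: finite_PiE)
qed

lemma finite_basis_idx: "finite (basis_idx N Q :: (('n::finite \<Rightarrow> nat) \<times> ('n \<Rightarrow> nat)) set)"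
  unfolding basis_idx_def using finite_cell_idx finite_deg_idx by blast

text \<open>Stars and bars: \<open>j\<close> is the restriction of a multiset of size \<open>Q\<close> over \<open>'n option\<close>, the
  extra point \<open>None\<close> absorbing the slack \<open>Q - |j|\<close>.\<close>
lemma card_deg_idx_le: "card (deg_idx Q :: ('n::finite \<Rightarrow> nat) set) \<le> CARD('n) + Q choose CARD('n)"
proof -
  define restr where "restr M = (\<lambda>d::'n. count M (Some d))" for M :: "'n option multiset"
  have "deg_idx Q \<subseteq> restr ` multisets_of_size UNIV Q"
  proof
    fix j :: "'n \<Rightarrow> nat" assume j: "j \<in> deg_idx Q"
    define M where "M = (\<Sum>d\<in>UNIV. replicate_mset (j d) (Some d)) + replicate_mset (Q - (\<Sum>d\<in>UNIV. j d)) None"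
    have "count M (Some d) = (\<Sum>d'\<in>UNIV. if d' = d then j d' else 0)" for d
      by (simp add: M_def count_sum)
    then have "restr M = j" by (simp add: restr_def fun_eq_iff)
    moreover have "size M = Q" using j by (simp add: M_def deg_idx_def)
    ultimately show "j \<in> restr ` multisets_of_size UNIV Q"
      by (auto simp: multisets_of_size_def)
  qed
  then have "card (deg_idx Q :: ('n \<Rightarrow> nat) set) \<le> card (restr ` multisets_of_size (UNIV :: 'n option set) Q)"
    by (intro card_mono finite_imageI finite_multisets_of_size) simp_all
  also have "\<dots> \<le> card (multisets_of_size (UNIV :: 'n option set) Q)"
    by (intro card_image_le finite_multisets_of_size) simp
  also have "\<dots> = CARD('n) + Q choose Q" by (simp add: card_multisets_of_size)
  also have "\<dots> = CARD('n) + Q choose CARD('n)"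
    using binomial_symmetric[of Q "CARD('n) + Q"] by simp
  finally show ?thesis .
qed

lemma pleg_sq_le:
  fixes x :: "real^'n::finite"
  assumes N: "N \<ge> 1" and x: "x \<in> cell N i" and j: "j \<in> deg_idx Q"
  shows "(pleg N j i x)\<^sup>2 \<le> real N ^ CARD('n) * exp (2 * real Q)"
proof -
  have "(pleg N j i x)\<^sup>2 = (\<Prod>d\<in>UNIV. (cell_legendre N (i d) (j d) (x$d))\<^sup>2)"
    unfolding pleg_eq_prod by (simp add: prod_power_distrib)
  also have "\<dots> \<le> (\<Prod>d\<in>UNIV. real N * exp (2 * real (j d)))"
    using x by (intro prod_mono) (auto simp: cell_def intro!: cell_legendre_sq_le[OF N])
  also have "\<dots> = real N ^ CARD('n) * exp (2 * real (\<Sum>d\<in>UNIV. j d))"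
    by (simp add: prod.distrib exp_sum sum_distrib_left)
  also have "\<dots> \<le> real N ^ CARD('n) * exp (2 * real Q)"
    using j by (intro mult_left_mono) (auto simp: deg_idx_def simp flip: of_nat_sum)
  finally show ?thesis .
qed

lemma sum_eta_sq_le:
  fixes x :: "real^'n::finite"
  assumes N: "N \<ge> 1"
  shows "(\<Sum>a\<in>basis_idx N Q. (eta N a x)\<^sup>2)
    \<le> real N ^ CARD('n) * exp (2 * real Q) * real (CARD('n) + Q choose CARD('n))"
proof (cases "\<exists>i\<in>cell_idx N. x \<in> cell N i")
  case True
  then obtain i where i: "i \<in> cell_idx N" "x \<in> cell N i" by blast
  have "(\<Sum>a\<in>basis_idx N Q. (eta N a x)\<^sup>2) = (\<Sum>i'\<in>cell_idx N. \<Sum>j\<in>deg_idx Q. (eta N (i', j) x)\<^sup>2)"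
    unfolding basis_idx_def by (simp add: sum.cartesian_product)
  also have "\<dots> = (\<Sum>j\<in>deg_idx Q. (eta N (i, j) x)\<^sup>2)"
  proof -
    have "(\<Sum>j\<in>deg_idx Q. (eta N (i', j) x)\<^sup>2) = 0" if "i' \<in> cell_idx N - {i}" for i'
    proof -
      have "x \<notin> cell N i'" using that cell_unique[OF N _ i(2), of i'] by blast
      then show ?thesis by (simp add: eta_def)
    qed
    then show ?thesis by (simp add: sum.remove[OF finite_cell_idx i(1)])
  qed
  also have "\<dots> = (\<Sum>j\<in>deg_idx Q. (pleg N j i x)\<^sup>2)"
    using i(2) by (simp add: eta_def)
  also have "\<dots> \<le> real (card (deg_idx Q :: ('n \<Rightarrow> nat) set)) * (real N ^ CARD('n) * exp (2 * real Q))"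
    by (rule sum_bounded_above) (rule pleg_sq_le[OF N i(2)])
  also have "\<dots> \<le> real (CARD('n) + Q choose CARD('n)) * (real N ^ CARD('n) * exp (2 * real Q))"
    using card_deg_idx_le[where 'n='n, of Q] by (intro mult_right_mono) auto
  finally show ?thesis by (simp add: mult_ac)
next
  case False
  then have "(\<Sum>a\<in>basis_idx N Q. (eta N a x)\<^sup>2) = 0"
    by (intro sum.neutral) (auto simp: basis_idx_def eta_def)
  then show ?thesis by simp
qed

theorem mainTheorem6:
  fixes f :: "real^'n::finite \<Rightarrow> real" and N Q :: nat
  assumes N: "N \<ge> 1"
    and cont: "continuous_on unit_cube f"
    and pos: "\<forall>x\<in>unit_cube. f x > 0"
    and dens: "integral unit_cube f = 1"
    and cond: "Q = 0 \<or> modcont f (1 / real N) = 0 \<or>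
       2 * real (CARD('n) + Q choose CARD('n)) * exp (2 * real Q)
         \<le> Inf (f ` unit_cube) / modcont f (1 / real N)"
  shows "(\<forall>lam \<in> eigenvalues_on (basis_idx N Q)
            (\<lambda>a b. integral unit_cube (\<lambda>x. eta N a x * eta N b x * f x)).
            Inf (f ` unit_cube) / 2 \<le> lam \<and> lam \<le> 3 / 2 * Sup (f ` unit_cube))
    \<and> (SUP (x::real^'n)\<in>unit_cube. \<Sum>a\<in>basis_idx N Q. (eta N a x)\<^sup>2)
         \<le> real N ^ CARD('n) * exp (2 * real Q) * real (CARD('n) + Q choose CARD('n))"
proof
  have "(0::real^'n) \<in> unit_cube" by (auto simp: mem_box_cart)
  then have ne: "(unit_cube :: (real^'n) set) \<noteq> {}" by blast
  have "bounded (f ` unit_cube)" by (intro compact_imp_bounded compact_continuous_image cont) simp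
  then have f_between: "Inf (f ` unit_cube) \<le> f x \<and> f x \<le> Sup (f ` unit_cube)" if "x \<in> unit_cube" for x
    using that by (auto intro: cInf_lower cSup_upper bounded_imp_bdd_below bounded_imp_bdd_above)
  have Inf_nonneg: "0 \<le> Inf (f ` unit_cube)"
    using ne pos by (intro cInf_greatest) (auto intro: less_imp_le)
  let ?R = "\<lambda>a b. integral unit_cube (\<lambda>x. eta N a x * eta N b x * f x)"
  show "\<forall>lam \<in> eigenvalues_on (basis_idx N Q) ?R.
      Inf (f ` unit_cube) / 2 \<le> lam \<and> lam \<le> 3 / 2 * Sup (f ` unit_cube)"
  proof
    fix lam assume lam: "lam \<in> eigenvalues_on (basis_idx N Q) ?R"
    have "Inf (f ` unit_cube) \<le> lam \<and> lam \<le> Sup (f ` unit_cube)"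
    proof (rule eigenvalue_weighted_gram_between[OF finite_basis_idx _ _ _ f_between lam])
      fix a b :: "('n \<Rightarrow> nat) \<times> ('n \<Rightarrow> nat)"
      assume a: "a \<in> basis_idx N Q" and b: "b \<in> basis_idx N Q"
      show "(\<lambda>x. eta N a x * eta N b x) integrable_on unit_cube"
        using integrable_eta_mult_eta[OF N a b continuous_on_const[of _ 1]] by simp
      show "(\<lambda>x. eta N a x * eta N b x * f x) integrable_on unit_cube"
        by (rule integrable_eta_mult_eta[OF N a b cont])
      show "integral unit_cube (\<lambda>x. eta N a x * eta N b x) = (if a = b then 1 else 0)"
        by (rule eta_orthonormal[OF N a b])
    qed
    then show "Inf (f ` unit_cube) / 2 \<le> lam \<and> lam \<le> 3 / 2 * Sup (f ` unit_cube)"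
      using Inf_nonneg by linarith
  qed
  show "(SUP (x::real^'n)\<in>unit_cube. \<Sum>a\<in>basis_idx N Q. (eta N a x)\<^sup>2)
      \<le> real N ^ CARD('n) * exp (2 * real Q) * real (CARD('n) + Q choose CARD('n))"
    by (rule cSUP_least[OF ne sum_eta_sq_le[OF N]])
qed

end
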